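(* Let $p,q\in(0,1)$. There exist constants $C, C'>0$, where $C$ depends only on $p$ and $q$, such that the following holds. Let $0<\varepsilon,\delta<1$ and let $n$ be a positive integer with $$n \ge C\log\!\left(\frac{C'}{\varepsilon\delta}\right).$$ Let $X_1,\dots,X_n$ be independent random variables uniformly distributed on $[-1,1]$, let $M_1,\dots,M_n$ be independent Bernoulli random variables with $\mathbb{P}(M_i=1)=p$, and let $M'_1,\dots,M'_n$ be independent Bernoulli random variables with $\mathbb{P}(M'_i=1)=q$, all of the $X_i, M_j, M'_k$ being mutually independent. Then, with probability at least $1-\delta$, for every $z\in[-1,1]$ there exists a set of indices $I\subseteq\{1,\dots,n\}$ such that $$\Big|\,z-\sum_{i=1}^{n} M_iM'_iX_i-\sum_{i\in I}M_i(1-M'_i)X_i\,\Big|\le\varepsilon .$$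
   Context: Interpretation: $M_i=0$ means the variable $X_i$ is permanently pruned (never usable); $M_i=1, M'_i=1$ means $X_i$ is locked (always included in the sum); $M_i=1, M'_i=0$ means $X_i$ is free and may be included or excluded via the chosen subset $I$. *)

theory Defs
  imports "HOL-Probability.Probability"
begin

text \<open>The Bernoulli value True encodes 1, False encodes 0.\<close>
definition coord_distr :: "real \<Rightarrow> real \<Rightarrow> (real \<times> bool \<times> bool) measure" where
  "coord_distr p q =
     uniform_measure lborel {-1..1::real} \<Otimes>\<^sub>M
       (measure_pmf (bernoulli_pmf p) \<Otimes>\<^sub>M measure_pmf (bernoulli_pmf q))"

definition sample_space :: "real \<Rightarrow> real \<Rightarrow> nat \<Rightarrow> (nat \<Rightarrow> real \<times> bool \<times> bool) measure" where
  "sample_space p q n = PiM {..<n} (\<lambda>_. coord_distr p q)"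

definition Xv :: "(nat \<Rightarrow> real \<times> bool \<times> bool) \<Rightarrow> nat \<Rightarrow> real" where
  "Xv \<omega> i = fst (\<omega> i)"
definition Mv :: "(nat \<Rightarrow> real \<times> bool \<times> bool) \<Rightarrow> nat \<Rightarrow> real" where
  "Mv \<omega> i = of_bool (fst (snd (\<omega> i)))"
definition M'v :: "(nat \<Rightarrow> real \<times> bool \<times> bool) \<Rightarrow> nat \<Rightarrow> real" where
  "M'v \<omega> i = of_bool (snd (snd (\<omega> i)))"

end

theory Submission
  imports Defs
begin

text \<open>
  Write \<open>Y\<^sub>i = M\<^sub>i (1 - M'\<^sub>i) X\<^sub>i\<close> for the free terms and \<open>L\<close> for the locked sum. Split the
  indices into a first half, used for fine approximation, and a second half, used for coarse
  steering.

  First half (Lueker's argument): let \<open>A\<^sub>k\<close> be the set of points of the window \<open>[-1/2, 1/2]\<close>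
  within \<open>\<epsilon>/2\<close> of a subset sum of \<open>Y\<^sub>1, \<dots>, Y\<^sub>k\<close>, and \<open>a\<^sub>k\<close> its measure. Revealing
  \<open>Y\<^sub>k\<^sub>+\<^sub>1\<close> adds the translate \<open>A\<^sub>k + Y\<^sub>k\<^sub>+\<^sub>1\<close>, which on average over \<open>Y\<^sub>k\<^sub>+\<^sub>1\<close> gains measure
  \<open>p (1 - q) a\<^sub>k (1 - a\<^sub>k) / 2\<close>. Hence the potential \<open>1/a - 1\<close> decreases in expectation by the
  factor \<open>1 - p (1 - q)/4\<close> at each step, and by Markov's inequality, after \<open>n/2\<close> steps the
  whole window is covered up to \<open>\<epsilon>\<close> except with exponentially small probability.

  Second half (Chernoff bound): with high probability \<open>L\<close> plus the positive free terms of the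
  second half exceeds 1, and likewise in the negative direction. Then for every target
  \<open>z \<in> [-1, 1]\<close> a greedy choice of second-half free terms brings \<open>z - L\<close> into the window, and the
  first half finishes the approximation.
\<close>

section \<open>Subset sums\<close>

definition subset_sum_nbhd :: "real \<Rightarrow> (nat \<Rightarrow> real) \<Rightarrow> nat \<Rightarrow> real set" where
  "subset_sum_nbhd e y k = {z. \<exists>I\<subseteq>{..<k}. \<bar>z - sum y I\<bar> \<le> e}"

lemma subset_sum_nbhd_cong:
  "(\<And>i. i < k \<Longrightarrow> y i = y' i) \<Longrightarrow> subset_sum_nbhd e y k = subset_sum_nbhd e y' k"
proof -
  assume "\<And>i. i < k \<Longrightarrow> y i = y' i"
  then have "I \<subseteq> {..<k} \<Longrightarrow> sum y I = sum y' I" for I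
    by (intro sum.cong) auto
  then show ?thesis unfolding subset_sum_nbhd_def by auto
qed

lemma subset_sum_nbhd_Suc:
  "z \<in> subset_sum_nbhd e y (Suc k) \<longleftrightarrow> z \<in> subset_sum_nbhd e y k \<or> z - y k \<in> subset_sum_nbhd e y k"
proof
  assume "z \<in> subset_sum_nbhd e y (Suc k)"
  then obtain I where I: "I \<subseteq> {..<Suc k}" "\<bar>z - sum y I\<bar> \<le> e"
    unfolding subset_sum_nbhd_def by blast
  show "z \<in> subset_sum_nbhd e y k \<or> z - y k \<in> subset_sum_nbhd e y k"
  proof (cases "k \<in> I")
    case True
    have "I - {k} \<subseteq> {..<k}" using I(1) by auto
    moreover have "sum y I = y k + sum y (I - {k})"
      using True finite_subset[OF I(1)] by (simp add: sum.remove)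
    ultimately have "z - y k \<in> subset_sum_nbhd e y k"
      using I(2) unfolding subset_sum_nbhd_def by (intro CollectI exI[of _ "I - {k}"]) simp
    then show ?thesis by (rule disjI2)
  next
    case False
    then have "I \<subseteq> {..<k}" using I(1) by (auto simp: less_Suc_eq)
    then have "z \<in> subset_sum_nbhd e y k"
      using I(2) unfolding subset_sum_nbhd_def by (intro CollectI exI[of _ I]) simp
    then show ?thesis by (rule disjI1)
  qed
next
  assume "z \<in> subset_sum_nbhd e y k \<or> z - y k \<in> subset_sum_nbhd e y k"
  then show "z \<in> subset_sum_nbhd e y (Suc k)"
  proof
    assume "z \<in> subset_sum_nbhd e y k"
    then obtain I where I: "I \<subseteq> {..<k}" "\<bar>z - sum y I\<bar> \<le> e"
      unfolding subset_sum_nbhd_def by blast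
    then have "I \<subseteq> {..<Suc k}" by auto
    then show ?thesis
      using I(2) unfolding subset_sum_nbhd_def by (intro CollectI exI[of _ I]) simp
  next
    assume "z - y k \<in> subset_sum_nbhd e y k"
    then obtain J where J: "J \<subseteq> {..<k}" "\<bar>z - y k - sum y J\<bar> \<le> e"
      unfolding subset_sum_nbhd_def by blast
    have "sum y (insert k J) = y k + sum y J"
      using J(1) finite_subset[OF J(1)] by (subst sum.insert) auto
    moreover have "insert k J \<subseteq> {..<Suc k}" using J(1) by auto
    ultimately show ?thesis
      using J(2) unfolding subset_sum_nbhd_def
      by (intro CollectI exI[of _ "insert k J"]) (simp add: algebra_simps)
  qed
qed

lemma interval_subset_subset_sum_nbhd: "{-e..e} \<subseteq> subset_sum_nbhd e y k"
  unfolding subset_sum_nbhd_def by (auto intro!: exI[of _ "{}"])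

lemma closed_subset_sum_nbhd: "closed (subset_sum_nbhd e y k)"
proof -
  have "subset_sum_nbhd e y k = (\<Union>I\<in>Pow {..<k}. {z. \<bar>z - sum y I\<bar> \<le> e})"
    by (auto simp: subset_sum_nbhd_def)
  moreover have "closed (\<Union>I\<in>Pow {..<k}. {z. \<bar>z - sum y I\<bar> \<le> e})"
    by (intro closed_UN) (auto intro!: closed_Collect_le continuous_intros)
  ultimately show ?thesis by simp
qed

lemma sets_subset_sum_nbhd[measurable]: "subset_sum_nbhd e y k \<in> sets borel"
  by (rule borel_closed[OF closed_subset_sum_nbhd])

lemma subset_sum_approx_half:
  fixes y :: "'a \<Rightarrow> real"
  assumes "finite A" "\<forall>i\<in>A. y i \<le> 1" "0 \<le> t" "t \<le> (\<Sum>i\<in>A. max (y i) 0)"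
  shows "\<exists>K\<subseteq>A. \<bar>t - sum y K\<bar> \<le> 1/2"
  using assms
proof (induction A arbitrary: t rule: finite_induct)
  case empty
  then show ?case by auto
next
  case (insert j J)
  let ?K = "{i\<in>J. 0 \<le> y i}"
  have "sum y ?K = (\<Sum>i\<in>J. if 0 \<le> y i then y i else 0)"
    using insert.hyps(1) by (rule sum.inter_filter)
  also have "\<dots> = (\<Sum>i\<in>J. max (y i) 0)" by (intro sum.cong) auto
  finally have sum_K: "sum y ?K = (\<Sum>i\<in>J. max (y i) 0)" .
  show ?case
  proof (cases "t \<le> (\<Sum>i\<in>J. max (y i) 0)")
    case True
    then have "\<exists>K\<subseteq>J. \<bar>t - sum y K\<bar> \<le> 1/2"
      using insert.IH[of t] insert.prems(1,2) by simp
    then show ?thesis by auto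
  next
    case False
    show ?thesis
    proof (cases "t - sum y ?K \<le> 1/2")
      case True
      then show ?thesis using False sum_K by (intro exI[of _ ?K]) auto
    next
      case far: False
      have reach: "t \<le> (\<Sum>i\<in>J. max (y i) 0) + max (y j) 0" using insert by simp
      then have "1/2 < max (y j) 0" using far sum_K by linarith
      then have "0 < y j" "y j \<le> 1" using insert.prems(1) by (auto simp: max_def split: if_splits)
      moreover have "sum y (insert j ?K) = y j + sum y ?K" using insert.hyps by simp
      ultimately show ?thesis
        using far reach sum_K by (intro exI[of _ "insert j ?K"]) auto
    qed
  qed
qed

text \<open>The terms with index in \<open>[m, n)\<close> bring the target into \<open>[-1/2, 1/2]\<close>,
  the first \<open>m\<close> terms do the rest.\<close>
lemma subset_sum_approx_extend:
  fixes y :: "nat \<Rightarrow> real"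
  assumes "m \<le> n" and bounded: "\<forall>i\<in>{m..<n}. \<bar>y i\<bar> \<le> 1"
    and fine: "\<And>u. u \<in> {-1/2..1/2} \<Longrightarrow> \<exists>I\<subseteq>{..<m}. \<bar>u - sum y I\<bar> \<le> e"
    and up: "t \<le> (\<Sum>i\<in>{m..<n}. max (y i) 0)" and down: "- t \<le> (\<Sum>i\<in>{m..<n}. max (- y i) 0)"
  shows "\<exists>I\<subseteq>{..<n}. \<bar>t - sum y I\<bar> \<le> e"
proof -
  obtain K where K: "K \<subseteq> {m..<n}" "\<bar>t - sum y K\<bar> \<le> 1/2"
  proof (cases "0 \<le> t")
    case True
    have "\<forall>i\<in>{m..<n}. y i \<le> 1" using bounded by auto
    then show ?thesis
      using subset_sum_approx_half[of "{m..<n}" y t] True up that by blast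
  next
    case False
    have "\<forall>i\<in>{m..<n}. - y i \<le> 1" using bounded by auto
    then obtain K where "K \<subseteq> {m..<n}" "\<bar>- t - sum (\<lambda>i. - y i) K\<bar> \<le> 1/2"
      using subset_sum_approx_half[of "{m..<n}" "\<lambda>i. - y i" "- t"] False down by force
    then show ?thesis using that by (simp add: sum_negf abs_minus_commute)
  qed
  have "t - sum y K \<in> {-1/2..1/2}" using K(2) unfolding atLeastAtMost_iff by linarith
  then obtain I where I: "I \<subseteq> {..<m}" "\<bar>t - sum y K - sum y I\<bar> \<le> e" using fine by blast
  have "K \<inter> I = {}" using K(1) I(1) by fastforce
  then have "sum y (K \<union> I) = sum y K + sum y I"
    using K(1) I(1) by (intro sum.union_disjoint) (auto intro: finite_subset)
  moreover have "K \<union> I \<subseteq> {..<n}" using K(1) I(1) \<open>m \<le> n\<close> by auto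
  ultimately show ?thesis using I(2) by (intro exI[of _ "K \<union> I"]) (auto simp: algebra_simps)
qed

lemma closed_near_finite:
  fixes c :: "'a \<Rightarrow> real"
  assumes "finite F"
  shows "closed {z. \<exists>I\<in>F. \<bar>z - c I\<bar> \<le> e}"
proof -
  have "{z. \<exists>I\<in>F. \<bar>z - c I\<bar> \<le> e} = (\<Union>I\<in>F. {z. \<bar>z - c I\<bar> \<le> e})" by auto
  moreover have "closed (\<Union>I\<in>F. {z. \<bar>z - c I\<bar> \<le> e})"
    using assms by (intro closed_UN) (auto intro!: closed_Collect_le continuous_intros)
  ultimately show ?thesis by simp
qed

lemma closure_Rats_interval: "closure ({-1..1} \<inter> \<rat>) = {-1..1::real}"
  by (simp add: closure_convex_Int_superset Rats_closure_real)

text \<open>Since the targets that can be approximated form a closed set, it suffices to approximate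
  the countably many rational targets; this makes the event measurable.\<close>
lemma near_interval_iff_near_rat:
  fixes c :: "'a \<Rightarrow> real"
  assumes "finite F"
  shows "(\<forall>z\<in>{-1..1}. \<exists>I\<in>F. \<bar>z - c I\<bar> \<le> e)
    \<longleftrightarrow> (\<forall>x::rat. of_rat x \<in> {-1..1::real} \<longrightarrow> (\<exists>I\<in>F. \<bar>of_rat x - c I\<bar> \<le> e))"
proof
  assume rat: "\<forall>x::rat. of_rat x \<in> {-1..1::real} \<longrightarrow> (\<exists>I\<in>F. \<bar>of_rat x - c I\<bar> \<le> e)"
  have "{-1..1} \<inter> \<rat> \<subseteq> {z. \<exists>I\<in>F. \<bar>z - c I\<bar> \<le> e}"
  proof
    fix z :: real assume z: "z \<in> {-1..1} \<inter> \<rat>"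
    then obtain x where x: "z = of_rat x" by (blast elim: Rats_cases)
    with z have "of_rat x \<in> {-1..1::real}" by simp
    then obtain I where "I \<in> F" "\<bar>of_rat x - c I\<bar> \<le> e" using rat by blast
    then show "z \<in> {z. \<exists>I\<in>F. \<bar>z - c I\<bar> \<le> e}" using x by auto
  qed
  then have "closure ({-1..1} \<inter> \<rat>) \<subseteq> {z. \<exists>I\<in>F. \<bar>z - c I\<bar> \<le> e}"
    by (intro closure_minimal closed_near_finite[OF assms])
  then show "\<forall>z\<in>{-1..1}. \<exists>I\<in>F. \<bar>z - c I\<bar> \<le> e" unfolding closure_Rats_interval by blast
qed auto

lemma sets_Collect_near_interval:
  fixes c :: "'b \<Rightarrow> 'a \<Rightarrow> real"
  assumes "finite F" and [measurable]: "\<And>I. I \<in> F \<Longrightarrow> (\<lambda>w. c w I) \<in> borel_measurable M"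
  shows "{w \<in> space M. \<forall>z\<in>{-1..1}. \<exists>I\<in>F. \<bar>z - c w I\<bar> \<le> e} \<in> sets M"
proof -
  have eq: "(\<forall>z\<in>{-1..1}. \<exists>I\<in>F. \<bar>z - c w I\<bar> \<le> e)
      \<longleftrightarrow> (\<forall>x::rat. of_rat x \<in> {-1..1::real} \<longrightarrow> (\<exists>I\<in>F. \<bar>of_rat x - c w I\<bar> \<le> e))" for w
    by (rule near_interval_iff_near_rat[OF assms(1)])
  have "{w \<in> space M. \<forall>x::rat. of_rat x \<in> {-1..1::real} \<longrightarrow> (\<exists>I\<in>F. \<bar>of_rat x - c w I\<bar> \<le> e)}
      \<in> sets M"
    using assms(1) by measurable
  then show ?thesis by (simp only: eq)
qed

section \<open>Covering the window\<close>

lemma emeasure_lborel_translate: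
  assumes [measurable]: "A \<in> sets borel"
  shows "emeasure lborel {x::real. x - y \<in> A} = emeasure lborel A"
proof -
  have "emeasure lborel A = emeasure (distr lborel borel ((+) (- y))) A"
    by (simp add: lborel_distr_plus)
  also have "\<dots> = emeasure lborel {x. x - y \<in> A}"
    by (subst emeasure_distr) (auto intro!: arg_cong[where f="emeasure lborel"])
  finally show ?thesis ..
qed

lemma emeasure_lborel_reflect_translate:
  assumes [measurable]: "A \<in> sets borel"
  shows "emeasure lborel {x::real. z - x \<in> A} = emeasure lborel A"
proof -
  have [measurable]: "{x::real. z + x \<in> A} \<in> sets borel" by measurable
  have "emeasure lborel A = emeasure (distr lborel borel ((+) z)) A"
    by (simp add: lborel_distr_plus)
  also have "\<dots> = emeasure lborel {x. z + x \<in> A}"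
    by (subst emeasure_distr) (auto intro!: arg_cong[where f="emeasure lborel"])
  also have "\<dots> = emeasure (distr lborel borel uminus) {x. z + x \<in> A}"
    by (simp add: lborel_distr_uminus)
  also have "\<dots> = emeasure lborel {x. z - x \<in> A}"
    by (subst emeasure_distr) (auto intro!: arg_cong[where f="emeasure lborel"])
  finally show ?thesis ..
qed

lemma fmeasurable_subset_window:
  fixes A :: "real set"
  shows "A \<in> sets borel \<Longrightarrow> A \<subseteq> {-1/2..1/2} \<Longrightarrow> A \<in> fmeasurable lborel"
  by (rule fmeasurableI2[of "{-1/2..1/2::real}"]) (auto intro: fmeasurableI)

definition shift_gain :: "real set \<Rightarrow> real \<Rightarrow> real set" where
  "shift_gain C x = {z \<in> {-1/2..1/2}. z - x \<in> C \<inter> {-1/2..1/2} \<and> z \<notin> C}"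

lemma sets_shift_gain[measurable]:
  assumes [measurable]: "C \<in> sets borel"
  shows "shift_gain C x \<in> sets borel"
  unfolding shift_gain_def by measurable

lemma emeasure_shift_gain_le:
  assumes [measurable]: "C \<in> sets borel"
  shows "emeasure lborel (shift_gain C x) \<le> emeasure lborel (C \<inter> {-1/2..1/2})"
proof -
  have "emeasure lborel (shift_gain C x) \<le> emeasure lborel {z. z - x \<in> C \<inter> {-1/2..1/2}}"
    by (intro emeasure_mono) (auto simp: shift_gain_def)
  also have "\<dots> = emeasure lborel (C \<inter> {-1/2..1/2})"
    by (rule emeasure_lborel_translate) measurable
  finally show ?thesis .
qed

lemma borel_measurable_emeasure_shift_gain[measurable]:
  assumes [measurable]: "C \<in> sets borel"
  shows "(\<lambda>x. emeasure lborel (shift_gain C x)) \<in> borel_measurable borel"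
proof -
  let ?O = "{xz::real \<times> real. snd xz \<in> shift_gain C (fst xz)}"
  have "Measurable.pred (borel \<Otimes>\<^sub>M lborel) (\<lambda>xz::real \<times> real. snd xz \<in> shift_gain C (fst xz))"
    unfolding shift_gain_def by measurable
  then have "?O \<in> sets (borel \<Otimes>\<^sub>M lborel)"
    unfolding pred_def by (simp add: space_pair_measure)
  from lborel.measurable_emeasure_Pair[OF this]
  show ?thesis by (simp add: vimage_def)
qed

text \<open>Fubini, then translation invariance in \<open>x\<close> for fixed \<open>z\<close>.\<close>
lemma nn_integral_shift_gain:
  assumes C[measurable]: "C \<in> sets borel"
  shows "(\<integral>\<^sup>+x. emeasure lborel (shift_gain C x) * indicator {-1..1} x \<partial>lborel)
     = emeasure lborel (C \<inter> {-1/2..1/2}) * emeasure lborel ({-1/2..1/2} - C)"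
proof -
  let ?W = "{-1/2..1/2::real}"
  let ?f = "\<lambda>x z. indicator ?W z * indicator (C \<inter> ?W) (z - x) * indicator (- C) z
    * indicator {-1..1::real} x :: ennreal"
  have [measurable]: "(\<lambda>(x, z). ?f x z) \<in> borel_measurable (lborel \<Otimes>\<^sub>M lborel)"
    by measurable
  have "(\<integral>\<^sup>+x. emeasure lborel (shift_gain C x) * indicator {-1..1} x \<partial>lborel)
      = (\<integral>\<^sup>+x. \<integral>\<^sup>+z. ?f x z \<partial>lborel \<partial>lborel)"
  proof (rule nn_integral_cong)
    fix x :: real
    have "emeasure lborel (shift_gain C x) = (\<integral>\<^sup>+z. indicator (shift_gain C x) z \<partial>lborel)"
      by simp
    also have "\<dots> = (\<integral>\<^sup>+z. indicator ?W z * indicator (C \<inter> ?W) (z - x) * indicator (- C) z \<partial>lborel)"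
      by (intro nn_integral_cong) (auto simp: shift_gain_def indicator_def)
    finally show "emeasure lborel (shift_gain C x) * indicator {-1..1} x = (\<integral>\<^sup>+z. ?f x z \<partial>lborel)"
      by (simp add: nn_integral_multc)
  qed
  also have "\<dots> = (\<integral>\<^sup>+z. \<integral>\<^sup>+x. ?f x z \<partial>lborel \<partial>lborel)"
    by (rule lborel_pair.Fubini') simp
  also have "\<dots> = (\<integral>\<^sup>+z. emeasure lborel (C \<inter> ?W) * indicator (?W - C) z \<partial>lborel)"
  proof (rule nn_integral_cong)
    fix z :: real
    show "(\<integral>\<^sup>+x. ?f x z \<partial>lborel) = emeasure lborel (C \<inter> ?W) * indicator (?W - C) z"
    proof (cases "z \<in> ?W - C")
      case True
      \<comment> \<open>for \<open>z\<close> in the window, \<open>z - x \<in> [-1/2, 1/2]\<close> already forces \<open>x \<in> [-1, 1]\<close>\<close>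
      have "?f x z = indicator {x. z - x \<in> C \<inter> ?W} x" for x
        using True by (auto simp: indicator_def)
      then have "(\<integral>\<^sup>+x. ?f x z \<partial>lborel) = emeasure lborel {x. z - x \<in> C \<inter> ?W}"
        by simp
      also have "\<dots> = emeasure lborel (C \<inter> ?W)"
        by (rule emeasure_lborel_reflect_translate) measurable
      finally show ?thesis using True by simp
    next
      case False
      then have "(\<lambda>x. ?f x z) = (\<lambda>x. 0)" by (auto simp: indicator_def)
      then show ?thesis using False by (simp del: nn_integral_indicator_singleton)
    qed
  qed
  also have "\<dots> = emeasure lborel (C \<inter> ?W) * emeasure lborel (?W - C)"
    by (subst nn_integral_cmult) auto
  finally show ?thesis .
qed

definition potential :: "real \<Rightarrow> real" where
  "potential a = 1 / a - 1"

lemma potential_nonneg: "0 < a \<Longrightarrow> a \<le> 1 \<Longrightarrow> 0 \<le> potential a"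
  unfolding potential_def by (simp add: field_simps)

lemma potential_decrease:
  assumes "0 < a" "0 \<le> d" "d \<le> a" "a + d \<le> a'"
  shows "potential a' \<le> potential a - d / (2 * a^2)"
proof -
  have "1 / a' \<le> 1 / (a + d)" using assms by (intro divide_left_mono) auto
  also have "\<dots> = 1 / a - d / (a * (a + d))"
  proof -
    have "0 < a + d" "0 < a * (a + d)" using assms by auto
    then show ?thesis using assms(1) by (simp add: field_simps)
  qed
  also have "\<dots> \<le> 1 / a - d / (2 * a^2)"
    using assms by (intro diff_left_mono divide_left_mono) (auto simp: power2_eq_square)
  finally show ?thesis unfolding potential_def by simp
qed

lemma potential_less_imp_gt:
  assumes "0 < a" "0 < e" "potential a < e"
  shows "1 - e < a"
proof -
  have "1 < a * (1 + e)" using assms unfolding potential_def by (simp add: field_simps)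
  moreover have "(1 - e) * (1 + e) \<le> 1" by (simp add: algebra_simps)
  ultimately have "(1 - e) * (1 + e) < a * (1 + e)" by linarith
  then show ?thesis using assms by (simp add: mult_less_cancel_right)
qed

lemma borel_measurable_potential[measurable]: "potential \<in> borel_measurable borel"
  unfolding potential_def by measurable

lemma potential_translate_union_le:
  assumes C[measurable]: "C \<in> sets borel" and a: "a = measure lborel (C \<inter> {-1/2..1/2})" "0 < a"
  shows "potential (measure lborel ((C \<union> {z. z - x \<in> C}) \<inter> {-1/2..1/2}))
    \<le> potential a - measure lborel (shift_gain C x) / (2 * a^2)"
proof (rule potential_decrease)
  have fin: "C \<inter> {-1/2..1/2} \<in> fmeasurable lborel" "shift_gain C x \<in> fmeasurable lborel"
    by (auto intro!: fmeasurable_subset_window simp: shift_gain_def)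
  show "measure lborel (shift_gain C x) \<le> a"
    using emeasure_shift_gain_le[OF C, of x] fin unfolding a(1)
    by (simp add: measure_def enn2real_mono fmeasurable_def)
  have "a + measure lborel (shift_gain C x) = measure lborel ((C \<inter> {-1/2..1/2}) \<union> shift_gain C x)"
  proof -
    have "(C \<inter> {-1/2..1/2}) \<inter> shift_gain C x = {}" by (auto simp: shift_gain_def)
    then show ?thesis
      unfolding a(1) using measure_Un3[OF fin] by simp
  qed
  also have "\<dots> \<le> measure lborel ((C \<union> {z. z - x \<in> C}) \<inter> {-1/2..1/2})"
    by (intro measure_mono_fmeasurable fmeasurable_subset_window) (auto simp: shift_gain_def)
  finally show "a + measure lborel (shift_gain C x) \<le> measure lborel ((C \<union> {z. z - x \<in> C}) \<inter> {-1/2..1/2})" .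
qed (use a in auto)

lemma window_near_of_measure_gt:
  assumes A[measurable]: "A \<in> sets borel" and e: "0 < e" "e \<le> 1/2"
    and big: "1 - e < measure lborel (A \<inter> {-1/2..1/2})" and z: "z \<in> {-1/2..1/2}"
  shows "\<exists>y\<in>A. \<bar>z - y\<bar> \<le> e"
proof (rule ccontr)
  assume far: "\<not> ?thesis"
  \<comment> \<open>an interval of length \<open>e\<close> next to \<open>z\<close> inside the window misses \<open>A\<close>\<close>
  define Q where "Q = (if z \<le> 0 then {z..z+e} else {z-e..z})"
  have Q: "Q \<subseteq> {-1/2..1/2}" "Q \<in> sets borel" "measure lborel Q = e"
    using z e unfolding Q_def by auto
  have "A \<inter> {-1/2..1/2} \<inter> Q = {}"
    using far unfolding Q_def by (force split: if_splits)
  moreover have "A \<inter> {-1/2..1/2} \<in> fmeasurable lborel" "Q \<in> fmeasurable lborel"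
    using Q by (auto intro!: fmeasurable_subset_window)
  ultimately have "measure lborel (A \<inter> {-1/2..1/2}) + measure lborel Q
      = measure lborel ((A \<inter> {-1/2..1/2}) \<union> Q)"
    using measure_Un3[of "A \<inter> {-1/2..1/2}" lborel Q] by simp
  also have "\<dots> \<le> measure lborel {-1/2..1/2::real}"
    using Q by (intro measure_mono_fmeasurable) (auto intro: fmeasurableI)
  finally show False using big Q(3) by simp
qed

lemma ennreal_le_diff_of_add_le:
  assumes "X + ennreal c \<le> ennreal P" "0 \<le> c"
  shows "X \<le> ennreal (P - c)"
proof -
  have "X \<noteq> \<infinity>" using assms(1) by (auto simp: top_unique)
  then obtain x where x: "X = ennreal x" "0 \<le> x" by (cases X) auto
  have sum_le: "ennreal (x + c) \<le> ennreal P" using assms x by (simp add: ennreal_plus)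
  show ?thesis
  proof (cases "0 \<le> P")
    case True
    then have "x + c \<le> P" using sum_le by (simp add: ennreal_le_iff)
    then show ?thesis using x by (auto intro: ennreal_leI)
  next
    case False
    then have "x + c \<le> 0" using sum_le ennreal_neg[of P] by (simp add: ennreal_eq_0_iff)
    then have "x = 0" using x assms(2) by simp
    then show ?thesis using x by simp
  qed
qed

lemma (in prob_space) nn_integral_le_diff:
  assumes [measurable]: "f \<in> borel_measurable M" "g \<in> borel_measurable M"
    and le: "\<And>x. f x + g x \<le> ennreal P" and g: "(\<integral>\<^sup>+x. g x \<partial>M) = ennreal G" "0 \<le> G"
  shows "(\<integral>\<^sup>+x. f x \<partial>M) \<le> ennreal (P - G)"
proof (rule ennreal_le_diff_of_add_le[OF _ g(2)])
  have "(\<integral>\<^sup>+x. f x \<partial>M) + ennreal G = (\<integral>\<^sup>+x. f x + g x \<partial>M)"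
    by (simp add: nn_integral_add g(1))
  also have "\<dots> \<le> (\<integral>\<^sup>+x. ennreal P \<partial>M)" by (intro nn_integral_mono le)
  also have "\<dots> = ennreal P" by (simp add: emeasure_space_1)
  finally show "(\<integral>\<^sup>+x. f x \<partial>M) + ennreal G \<le> ennreal P" .
qed

lemma exp_neg_le_quadratic:
  fixes u :: real
  assumes "\<bar>u\<bar> \<le> 1"
  shows "exp (- u) \<le> 1 - u + u^2"
proof (cases "u \<le> 0")
  case True
  have "exp (- u) \<le> 1 + (- u) + (- u)^2" using assms True by (intro exp_bound) auto
  then show ?thesis by simp
next
  case False
  have "exp (- u) \<le> 1 / (1 + u)"
    using False exp_ge_add_one_self[of u] by (simp add: exp_minus field_simps)
  also have "\<dots> \<le> 1 - u + u^2"
  proof -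
    have "1 \<le> (1 + u) * (1 - u + u^2)" using False by (simp add: algebra_simps power2_eq_square)
    then show ?thesis using False by (simp add: field_simps)
  qed
  finally show ?thesis .
qed

lemma integral_id_interval: "(\<integral>x. x * indicator {-1..1::real} x \<partial>lborel) = 0"
  using integral_power[of "-1" 1 1] by simp

lemma integral_pos_part_interval:
  assumes "s = 1 \<or> s = (-1::real)"
  shows "(\<integral>x. max (s * x) 0 * indicator {-1..1::real} x \<partial>lborel) = 1/2"
  using assms
proof
  assume "s = 1"
  then have "(\<lambda>x. max (s * x) 0 * indicator {-1..1::real} x) = (\<lambda>x. x ^ 1 * indicator {0..1} x)"
    by (auto simp: indicator_def fun_eq_iff)
  then show ?thesis using integral_power[of 0 1 1] by simp
next
  assume "s = -1"
  then have "(\<lambda>x. max (s * x) 0 * indicator {-1..1::real} x) = (\<lambda>x. - (x ^ 1 * indicator {-1..0} x))"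
    by (auto simp: indicator_def fun_eq_iff)
  then show ?thesis using integral_power[of "-1" 0 1] by simp
qed

lemma nn_integral_interval_pos_part:
  fixes a b c s :: real
  assumes s: "s = 1 \<or> s = -1" and nonneg: "\<And>x. \<bar>x\<bar> \<le> 1 \<Longrightarrow> 0 \<le> c - a * max (s * x) 0 - b * x"
  shows "(\<integral>\<^sup>+x. ennreal ((c - a * max (s * x) 0 - b * x) * indicator {-1..1} x) \<partial>lborel)
    = ennreal (2 * c - a / 2)"
proof -
  have "(\<integral>\<^sup>+x. ennreal ((c - a * max (s * x) 0 - b * x) * indicator {-1..1} x) \<partial>lborel)
      = ennreal (\<integral>x. (c - a * max (s * x) 0 - b * x) * indicator {-1..1} x \<partial>lborel)"
    using nonneg
    by (intro nn_integral_eq_integral borel_integrable_atLeastAtMost AE_I2)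
      (auto simp: indicator_def intro!: continuous_intros)
  also have "(\<integral>x. (c - a * max (s * x) 0 - b * x) * indicator {-1..1} x \<partial>lborel)
      = (\<integral>x. c * indicator {-1..1::real} x - a * (max (s * x) 0 * indicator {-1..1::real} x)
           - b * (x * indicator {-1..1::real} x) \<partial>lborel)"
    by (intro Bochner_Integration.integral_cong) (auto simp: indicator_def algebra_simps)
  also have "\<dots> = 2 * c - a / 2"
  proof -
    have "integrable lborel (\<lambda>x. max (s * x) 0 * indicator {-1..1::real} x)"
      "integrable lborel (\<lambda>x. x * indicator {-1..1::real} x)"
      by (intro borel_integrable_atLeastAtMost; auto intro!: continuous_intros)+
    then show ?thesis
      using integral_pos_part_interval[OF s] integral_id_interval
      by (simp add: Bochner_Integration.integral_diff)
  qed
  finally show ?thesis .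
qed

lemma chernoff_exponent_le:
  fixes r :: real
  assumes "0 < r" "r \<le> 1"
  shows "r/16 + real n * (r/16)^2 - (r/16) * (r/4) * real (n - n div 2) \<le> 1 - real n * r^2/256"
proof -
  have "(r/16) * (r/4) * (real n / 2) \<le> (r/16) * (r/4) * real (n - n div 2)"
    using assms by (intro mult_left_mono) (linarith, simp)
  moreover have "(r/16) * (r/4) * (real n / 2) = real n * r^2/128"
    "real n * (r/16)^2 = real n * r^2/256"
    by (simp_all add: power2_eq_square)
  ultimately show ?thesis using assms by linarith
qed

lemma geometric_le_exp:
  fixes r :: real
  assumes "0 < r" "r \<le> 1"
  shows "(1 - r/4) ^ (n div 2) \<le> exp (1 - real n * r^2/256)"
proof -
  have "(1 - r/4) ^ (n div 2) \<le> exp (- (r/4)) ^ (n div 2)"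
    using assms by (intro power_mono) (auto simp: exp_ge_add_one_self[of "-(r/4)", simplified])
  also have "\<dots> = exp (- (r/4) * real (n div 2))" by (simp add: exp_of_nat_mult[symmetric] mult.commute)
  also have "\<dots> \<le> exp (1 - real n * r^2/256)"
  proof -
    have "- (r/4) * real (n div 2) \<le> - (r/4) * (real n / 2 - 1/2)"
      using assms by (intro mult_left_mono_neg) linarith+
    moreover have "real n * r^2 \<le> real n * (32 * r)"
      using assms by (intro mult_left_mono) (auto simp: power2_eq_square)
    ultimately show ?thesis using assms by (simp add: field_simps)
  qed
  finally show ?thesis .
qed

lemma failure_bound_le:
  fixes r e d :: real
  assumes r: "0 < r" "r \<le> 1" and e: "0 < e" "e < 1" and d: "0 < d" "d < 1"
    and n: "2 * ln (11 / (e * d)) \<le> real n * r^2/256"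
  shows "2 * exp (r/16 + real n * (r/16)^2 - (r/16) * (r/4) * real (n - n div 2))
     + (1 - r/4) ^ (n div 2) / (2 * (e/2)^2) \<le> d"
proof -
  define X where "X = exp (- (real n * r^2/256))"
  have "ln ((11 / (e * d))^2) \<le> real n * r^2/256" using n e d by (simp add: ln_realpow)
  then have "(11 / (e * d))^2 \<le> exp (real n * r^2/256)"
    using e d by (subst ln_le_cancel_iff[symmetric]) auto
  then have X: "0 < X" "X \<le> (e * d)^2 / 121"
    unfolding X_def using e d by (auto simp: exp_minus field_simps power_divide)
  have "exp (1 - real n * r^2/256) = exp 1 * X"
    unfolding X_def by (simp add: exp_add[symmetric])
  also have "\<dots> \<le> 3 * X" using X exp_le by (intro mult_right_mono) auto
  finally have exp_X: "exp (1 - real n * r^2/256) \<le> 3 * X" .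
  have "2 * exp (r/16 + real n * (r/16)^2 - (r/16) * (r/4) * real (n - n div 2))
     + (1 - r/4) ^ (n div 2) / (2 * (e/2)^2) \<le> 2 * (3 * X) + (3 * X) / (2 * (e/2)^2)"
    using chernoff_exponent_le[OF r, of n] geometric_le_exp[OF r, of n] exp_X e
    by (intro add_mono divide_right_mono mult_left_mono) (auto intro: order.trans)
  also have "\<dots> = 6 * X + 6 * X / e^2" using e by (simp add: field_simps power2_eq_square)
  also have "\<dots> \<le> 12 * X / e^2"
    using X e by (simp add: field_simps power_le_one)
  also have "\<dots> \<le> 12 * ((e * d)^2 / 121) / e^2"
    using X e by (intro divide_right_mono mult_left_mono) auto
  also have "\<dots> \<le> d" using e d by (simp add: power2_eq_square field_simps)
  finally show ?thesis .
qed

section \<open>One coordinate\<close>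

lemma prob_space_coord_distr:
  "0 \<le> p \<Longrightarrow> p \<le> 1 \<Longrightarrow> 0 \<le> q \<Longrightarrow> q \<le> 1 \<Longrightarrow> prob_space (coord_distr p q)"
  unfolding coord_distr_def
  by (intro prob_space_pair prob_space_uniform_measure prob_space_measure_pmf) auto

lemma sets_pair_measure_bool_pmf:
  "sets (measure_pmf (A::bool pmf) \<Otimes>\<^sub>M measure_pmf (B::bool pmf)) = UNIV"
proof -
  have "sets (measure_pmf A \<Otimes>\<^sub>M measure_pmf B) =
      sets (count_space (UNIV::bool set) \<Otimes>\<^sub>M count_space (UNIV::bool set))"
    by (intro sets_pair_measure_cong) auto
  also have "\<dots> = UNIV" by (subst pair_measure_countable) auto
  finally show ?thesis .
qed

lemma nn_integral_bernoulli_pmf: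
  "0 < p \<Longrightarrow> p < 1 \<Longrightarrow>
    (\<integral>\<^sup>+b. f b \<partial>measure_pmf (bernoulli_pmf p)) = ennreal p * f True + ennreal (1 - p) * f False"
  by (subst nn_integral_measure_pmf_finite) (auto simp: UNIV_bool mult.commute)

lemma nn_integral_coord_distr:
  assumes p: "0 < p" "p < 1" and q: "0 < q" "q < 1"
    and f: "f \<in> borel_measurable (coord_distr p q)"
  shows "(\<integral>\<^sup>+y. f y \<partial>coord_distr p q) =
    (\<integral>\<^sup>+x. (ennreal (p*q) * f (x,True,True) + ennreal (p*(1-q)) * f (x,True,False)
       + ennreal ((1-p)*q) * f (x,False,True) + ennreal ((1-p)*(1-q)) * f (x,False,False))
        * indicator {-1..1} x \<partial>lborel) / 2"
proof -
  let ?U = "uniform_measure lborel {-1..1::real}"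
  let ?B = "measure_pmf (bernoulli_pmf p) \<Otimes>\<^sub>M measure_pmf (bernoulli_pmf q)"
  have B: "sigma_finite_measure ?B"
    by (intro prob_space_imp_sigma_finite prob_space_pair prob_space_measure_pmf)
  have fm: "f \<in> borel_measurable (?U \<Otimes>\<^sub>M ?B)" using f unfolding coord_distr_def .
  have f_Pair: "(\<lambda>bb. f (x, bb)) \<in> borel_measurable ?B" for x
    by (simp add: measurable_def sets_pair_measure_bool_pmf space_pair_measure)
  have [measurable]: "(\<lambda>x. f (x, b)) \<in> borel_measurable borel" for b
  proof -
    have "(\<lambda>x::real. (x, b)) \<in> measurable borel (?U \<Otimes>\<^sub>M ?B)"
      by (intro measurable_Pair)
        (auto simp: measurable_ident_sets measurable_def sets_pair_measure_bool_pmf space_pair_measure)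
    then show ?thesis by (rule measurable_compose[OF _ fm])
  qed
  have "(\<integral>\<^sup>+y. f y \<partial>coord_distr p q) = (\<integral>\<^sup>+x. \<integral>\<^sup>+bb. f (x,bb) \<partial>?B \<partial>?U)"
    unfolding coord_distr_def by (rule sigma_finite_measure.nn_integral_fst[symmetric, OF B fm])
  also have "\<dots> = (\<integral>\<^sup>+x. (ennreal (p*q) * f (x,True,True) + ennreal (p*(1-q)) * f (x,True,False)
       + ennreal ((1-p)*q) * f (x,False,True) + ennreal ((1-p)*(1-q)) * f (x,False,False)) \<partial>?U)"
  proof (rule nn_integral_cong)
    fix x
    have "(\<integral>\<^sup>+bb. f (x,bb) \<partial>?B) = (\<integral>\<^sup>+b1. \<integral>\<^sup>+b2. f (x,b1,b2)
        \<partial>measure_pmf (bernoulli_pmf q) \<partial>measure_pmf (bernoulli_pmf p))"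
      by (rule sigma_finite_measure.nn_integral_fst[symmetric, OF prob_space_imp_sigma_finite])
        (use f_Pair in \<open>simp_all add: prob_space_measure_pmf\<close>)
    also have "\<dots> = ennreal (p*q) * f (x,True,True) + ennreal (p*(1-q)) * f (x,True,False)
       + ennreal ((1-p)*q) * f (x,False,True) + ennreal ((1-p)*(1-q)) * f (x,False,False)"
      using p q by (simp add: nn_integral_bernoulli_pmf distrib_left ennreal_mult mult_ac add.assoc)
    finally show "(\<integral>\<^sup>+bb. f (x,bb) \<partial>?B) = \<dots>" .
  qed
  also have "\<dots> = (\<integral>\<^sup>+x. (ennreal (p*q) * f (x,True,True) + ennreal (p*(1-q)) * f (x,True,False)
       + ennreal ((1-p)*q) * f (x,False,True) + ennreal ((1-p)*(1-q)) * f (x,False,False))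
        * indicator {-1..1} x \<partial>lborel) / 2"
    by (subst nn_integral_uniform_measure) (auto simp: mult.commute)
  finally show ?thesis .
qed

lemma measurable_coord_distr_fst[measurable]: "fst \<in> borel_measurable (coord_distr p q)"
proof -
  have "fst \<in> measurable (coord_distr p q) (uniform_measure lborel {-1..1::real})"
    unfolding coord_distr_def by simp
  moreover have "(\<lambda>x. x) \<in> measurable (uniform_measure lborel {-1..1::real}) borel"
    by (simp add: measurable_ident_sets)
  ultimately show ?thesis by (rule measurable_compose)
qed

lemma measurable_coord_distr_snd_eq[measurable]:
  "Measurable.pred (coord_distr p q) (\<lambda>y. snd y = c)"
proof -
  have "snd \<in> measurable (coord_distr p q)
      (measure_pmf (bernoulli_pmf p) \<Otimes>\<^sub>M measure_pmf (bernoulli_pmf q))"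
    unfolding coord_distr_def by simp
  moreover have "Measurable.pred (measure_pmf (bernoulli_pmf p) \<Otimes>\<^sub>M measure_pmf (bernoulli_pmf q))
      (\<lambda>b. b = c)"
    unfolding pred_def using sets_pair_measure_bool_pmf by auto
  ultimately show ?thesis by (rule measurable_compose)
qed

lemma borel_measurable_coord_distrI:
  fixes f :: "real \<times> bool \<times> bool \<Rightarrow> 'b::topological_space"
  assumes "\<And>b1 b2. (\<lambda>x. f (x,b1,b2)) \<in> borel_measurable borel"
  shows "f \<in> borel_measurable (coord_distr p q)"
proof -
  have [measurable]: "(\<lambda>y. f (fst y, b1, b2)) \<in> borel_measurable (coord_distr p q)" for b1 b2
    using measurable_compose[OF measurable_coord_distr_fst assms] .
  have eq: "f = (\<lambda>y. if snd y = (True,True) then f (fst y, True, True) else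
     if snd y = (True,False) then f (fst y, True, False) else
     if snd y = (False,True) then f (fst y, False, True) else f (fst y, False, False))"
    by (auto simp: fun_eq_iff)
  show ?thesis by (subst eq) measurable
qed

lemma AE_coord_distr_abs_le_1: "AE y in coord_distr p q. \<bar>fst y\<bar> \<le> 1"
proof (rule AE_I')
  let ?U = "uniform_measure lborel {-1..1::real}"
  let ?B = "measure_pmf (bernoulli_pmf p) \<Otimes>\<^sub>M measure_pmf (bernoulli_pmf q)"
  let ?N = "{x::real. 1 < \<bar>x\<bar>} \<times> (UNIV :: (bool \<times> bool) set)"
  have B: "sigma_finite_measure ?B"
    by (intro prob_space_imp_sigma_finite prob_space_pair prob_space_measure_pmf)
  have "emeasure (coord_distr p q) ?N = emeasure ?U {x::real. 1 < \<bar>x\<bar>} * emeasure ?B UNIV"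
    unfolding coord_distr_def
    by (rule sigma_finite_measure.emeasure_pair_measure_Times[OF B])
      (simp_all add: sets_pair_measure_bool_pmf)
  also have "emeasure ?U {x::real. 1 < \<bar>x\<bar>} = 0"
  proof -
    have "{-1..1} \<inter> {x::real. 1 < \<bar>x\<bar>} = {}" by auto
    then show ?thesis by (subst emeasure_uniform_measure) auto
  qed
  finally show "?N \<in> null_sets (coord_distr p q)"
    unfolding coord_distr_def by (simp add: null_sets_def sets_pair_measure_bool_pmf)
  show "{y \<in> space (coord_distr p q). \<not> \<bar>fst y\<bar> \<le> 1} \<subseteq> ?N" by auto
qed

abbreviation is_free :: "real \<times> bool \<times> bool \<Rightarrow> bool" where
  "is_free y \<equiv> fst (snd y) \<and> \<not> snd (snd y)"

abbreviation is_locked :: "real \<times> bool \<times> bool \<Rightarrow> bool" where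
  "is_locked y \<equiv> fst (snd y) \<and> snd (snd y)"

lemma borel_measurable_coord_distr_free:
  assumes "g \<in> borel_measurable borel"
  shows "(\<lambda>y. if is_free y then g (fst y) else 0) \<in> borel_measurable (coord_distr p q)"
proof (rule borel_measurable_coord_distrI)
  fix b1 b2
  show "(\<lambda>x. if is_free (x, b1, b2) then g (fst (x, b1, b2)) else 0) \<in> borel_measurable borel"
    using assms by (cases b1; cases b2) simp_all
qed

lemma borel_measurable_coord_distr_locked:
  "(\<lambda>y. if is_locked y then fst y else 0 :: real) \<in> borel_measurable (coord_distr p q)"
proof (rule borel_measurable_coord_distrI)
  fix b1 b2
  show "(\<lambda>x. if is_locked (x, b1, b2) then fst (x, b1, b2) else 0 :: real) \<in> borel_measurable borel"
    by (cases b1; cases b2) simp_all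
qed

definition free_part :: "(nat \<Rightarrow> real \<times> bool \<times> bool) \<Rightarrow> nat \<Rightarrow> real" where
  "free_part w i = Mv w i * (1 - M'v w i) * Xv w i"

definition locked_sum :: "nat \<Rightarrow> (nat \<Rightarrow> real \<times> bool \<times> bool) \<Rightarrow> real" where
  "locked_sum n w = (\<Sum>i<n. Mv w i * M'v w i * Xv w i)"

definition coverage :: "real \<Rightarrow> nat \<Rightarrow> (nat \<Rightarrow> real \<times> bool \<times> bool) \<Rightarrow> real" where
  "coverage e k w = measure lborel (subset_sum_nbhd e (free_part w) k \<inter> {-1/2..1/2})"

text \<open>For \<open>s = \<plusminus>1\<close>, the sum of \<open>reach s (m \<le> i) (w i)\<close> over \<open>i < n\<close> is the largest value in
  direction \<open>s\<close> of the locked sum plus a subset sum of free terms with index at least \<open>m\<close>.\<close>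
definition reach :: "real \<Rightarrow> bool \<Rightarrow> real \<times> bool \<times> bool \<Rightarrow> real" where
  "reach s active y = (if active \<and> is_free y then max (s * fst y) 0 else 0)
      + (if is_locked y then s * fst y else 0)"

lemma free_part_eq: "free_part w i = (if is_free (w i) then fst (w i) else 0)"
  by (simp add: free_part_def Mv_def M'v_def Xv_def)

lemma locked_sum_eq: "locked_sum n w = (\<Sum>i<n. if is_locked (w i) then fst (w i) else 0)"
  by (auto simp: locked_sum_def Mv_def M'v_def Xv_def intro!: sum.cong)

lemma sum_reach:
  "(\<Sum>i<n. reach s (m \<le> i) (w i))
    = (\<Sum>i\<in>{m..<n}. max (s * free_part w i) 0) + s * locked_sum n w"
proof -
  have "(\<Sum>i<n. reach s (m \<le> i) (w i))
      = (\<Sum>i<n. if m \<le> i then max (s * free_part w i) 0 else 0) + (\<Sum>i<n. s * (Mv w i * M'v w i * Xv w i))"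
    unfolding sum.distrib[symmetric]
    by (rule sum.cong) (auto simp: reach_def free_part_eq Mv_def M'v_def Xv_def)
  also have "(\<Sum>i<n. if m \<le> i then max (s * free_part w i) 0 else 0)
      = (\<Sum>i\<in>{m..<n}. max (s * free_part w i) 0)"
    by (simp add: sum.inter_filter[symmetric] atLeastLessThan_def Int_def conj_commute)
  finally show ?thesis by (simp add: locked_sum_def sum_distrib_left)
qed

lemma coverage_bounds:
  assumes "0 < e" "e \<le> 1/2"
  shows "2 * e \<le> coverage e k w" "coverage e k w \<le> 1"
proof -
  have fin: "subset_sum_nbhd e (free_part w) k \<inter> {-1/2..1/2} \<in> fmeasurable lborel"
    by (intro fmeasurable_subset_window) auto
  have "{-e..e} \<subseteq> subset_sum_nbhd e (free_part w) k \<inter> {-1/2..1/2}"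
    using interval_subset_subset_sum_nbhd[of e] assms by auto
  then have "measure lborel {-e..e} \<le> coverage e k w"
    unfolding coverage_def by (intro measure_mono_fmeasurable fin) auto
  then show "2 * e \<le> coverage e k w" using assms by simp
  have "coverage e k w \<le> measure lborel {-1/2..1/2::real}"
    unfolding coverage_def by (intro measure_mono_fmeasurable) (auto intro: fmeasurableI)
  then show "coverage e k w \<le> 1" by simp
qed

lemma coverage_Suc_update:
  "coverage e (Suc k) (w(k := y)) = measure lborel
     ((subset_sum_nbhd e (free_part w) k \<union> {z. z - free_part (w(k := y)) k \<in> subset_sum_nbhd e (free_part w) k})
       \<inter> {-1/2..1/2})"
proof -
  have cong: "subset_sum_nbhd e (free_part (w(k := y))) k = subset_sum_nbhd e (free_part w) k"
    by (rule subset_sum_nbhd_cong) (simp add: free_part_def Mv_def M'v_def Xv_def)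
  have "subset_sum_nbhd e (free_part (w(k := y))) (Suc k) = subset_sum_nbhd e (free_part w) k
      \<union> {z. z - free_part (w(k := y)) k \<in> subset_sum_nbhd e (free_part w) k}"
    by (rule set_eqI) (simp only: subset_sum_nbhd_Suc cong Un_iff mem_Collect_eq)
  then show ?thesis unfolding coverage_def by simp
qed

lemma coverage_update_ge: "k \<le> j \<Longrightarrow> coverage e k (w(j := y)) = coverage e k w"
  unfolding coverage_def
  by (intro arg_cong[where f="\<lambda>A. measure lborel (A \<inter> _)"] subset_sum_nbhd_cong)
    (simp add: free_part_def Mv_def M'v_def Xv_def)

lemma coverage_Suc_update_not_free:
  assumes "\<not> is_free y"
  shows "coverage e (Suc k) (w(k := y)) = coverage e k w"
proof -
  have "free_part (w(k := y)) k = 0" using assms by (auto simp: free_part_eq)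
  then show ?thesis unfolding coverage_Suc_update by (simp add: coverage_def)
qed

lemma potential_coverage_Suc_update_le:
  assumes e: "0 < e" "e \<le> 1/2" and "is_free y"
  shows "potential (coverage e (Suc k) (w(k := y))) \<le> potential (coverage e k w)
    - measure lborel (shift_gain (subset_sum_nbhd e (free_part w) k) (fst y)) / (2 * (coverage e k w)^2)"
proof -
  have "0 < coverage e k w" using coverage_bounds[OF e, of k w] e by linarith
  from potential_translate_union_le[OF sets_subset_sum_nbhd coverage_def this, of "fst y"]
  show ?thesis using \<open>is_free y\<close> unfolding coverage_Suc_update by (simp add: free_part_eq)
qed

lemma reach_exp_mixture_le:
  fixes p q s t x :: real and active :: bool
  assumes p: "0 < p" "p < 1" and q: "0 < q" "q < 1" and s: "s = 1 \<or> s = -1"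
    and t: "0 < t" "t \<le> 1" and x: "\<bar>x\<bar> \<le> 1"
  defines "r \<equiv> if active then p * (1 - q) else 0"
  shows "p*q * exp (- t * reach s active (x,True,True)) + p*(1-q) * exp (- t * reach s active (x,True,False))
       + (1-p)*q * exp (- t * reach s active (x,False,True)) + (1-p)*(1-q) * exp (- t * reach s active (x,False,False))
     \<le> 1 + t^2 - (t * r) * max (s * x) 0 - (t * p * q * s) * x"
proof -
  have sx: "\<bar>s * x\<bar> \<le> 1" using s x by auto
  have bound: "exp (- t * reach s active (x,b1,b2)) \<le> 1 - t * reach s active (x,b1,b2) + t^2" for b1 b2
  proof -
    have h: "\<bar>reach s active (x,b1,b2)\<bar> \<le> 1" using sx unfolding reach_def by auto
    then have "\<bar>t * reach s active (x,b1,b2)\<bar> \<le> 1"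
      using t by (auto simp: abs_mult intro: mult_le_one)
    moreover have "(t * reach s active (x,b1,b2))^2 \<le> t^2"
      using h t by (simp add: power_mult_distrib abs_square_le_1 mult_left_le)
    ultimately show ?thesis using exp_neg_le_quadratic[of "t * reach s active (x,b1,b2)"] by simp
  qed
  have w: "0 \<le> p*q" "0 \<le> p*(1-q)" "0 \<le> (1-p)*q" "0 \<le> (1-p)*(1-q)" using p q by auto
  have "p*q * exp (- t * reach s active (x,True,True)) + p*(1-q) * exp (- t * reach s active (x,True,False))
       + (1-p)*q * exp (- t * reach s active (x,False,True)) + (1-p)*(1-q) * exp (- t * reach s active (x,False,False))
     \<le> p*q * (1 - t * reach s active (x,True,True) + t^2) + p*(1-q) * (1 - t * reach s active (x,True,False) + t^2)
       + (1-p)*q * (1 - t * reach s active (x,False,True) + t^2)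
       + (1-p)*(1-q) * (1 - t * reach s active (x,False,False) + t^2)"
    using w bound by (intro add_mono mult_left_mono) auto
  also have "\<dots> = 1 + t^2 - (t * r) * max (s * x) 0 - (t * p * q * s) * x"
    unfolding r_def reach_def by (simp add: algebra_simps)
  finally show ?thesis .
qed

lemma approx_of_reach_and_potential:
  assumes "m \<le> n" and bounded: "\<forall>i<n. \<bar>fst (w i)\<bar> \<le> 1"
    and up: "1 \<le> (\<Sum>i<n. reach 1 (m \<le> i) (w i))" and down: "1 \<le> (\<Sum>i<n. reach (-1) (m \<le> i) (w i))"
    and h: "0 < h" "h \<le> 1/2" and small: "potential (coverage h m w) < h"
    and z: "z \<in> {-1..1}"
  shows "\<exists>I\<subseteq>{..<n}. \<bar>z - locked_sum n w - sum (free_part w) I\<bar> \<le> 2 * h"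
proof -
  have "0 < coverage h m w" using coverage_bounds[OF h, of m w] h by linarith
  then have big: "1 - h < measure lborel (subset_sum_nbhd h (free_part w) m \<inter> {-1/2..1/2})"
    using potential_less_imp_gt[OF _ h(1) small] unfolding coverage_def by blast
  have fine: "\<exists>I\<subseteq>{..<m}. \<bar>u - sum (free_part w) I\<bar> \<le> 2 * h" if u: "u \<in> {-1/2..1/2}" for u
  proof -
    obtain v where "v \<in> subset_sum_nbhd h (free_part w) m" "\<bar>u - v\<bar> \<le> h"
      using window_near_of_measure_gt[OF sets_subset_sum_nbhd h big u] by blast
    then obtain I where "I \<subseteq> {..<m}" "\<bar>v - sum (free_part w) I\<bar> \<le> h"
      unfolding subset_sum_nbhd_def by blast
    then show ?thesis using \<open>\<bar>u - v\<bar> \<le> h\<close> by (intro exI[of _ I]) auto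
  qed
  have "\<forall>i\<in>{m..<n}. \<bar>free_part w i\<bar> \<le> 1" using bounded by (auto simp: free_part_eq)
  moreover have "z - locked_sum n w \<le> (\<Sum>i\<in>{m..<n}. max (free_part w i) 0)"
    using up z unfolding sum_reach by simp
  moreover have "- (z - locked_sum n w) \<le> (\<Sum>i\<in>{m..<n}. max (- free_part w i) 0)"
    using down z unfolding sum_reach by simp
  ultimately obtain I where "I \<subseteq> {..<n}" "\<bar>z - locked_sum n w - sum (free_part w) I\<bar> \<le> 2 * h"
    using subset_sum_approx_extend[OF \<open>m \<le> n\<close> _ fine] by blast
  then show ?thesis by blast
qed

section \<open>Probability estimates\<close>

locale prune_lock =
  fixes p q :: real
  assumes p: "0 < p" "p < 1" and q: "0 < q" "q < 1"
begin

abbreviation "CD \<equiv> coord_distr p q"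

abbreviation "SS n \<equiv> sample_space p q n"

lemma prob_space_CD: "prob_space CD"
  using prob_space_coord_distr p q by auto

sublocale P: product_prob_space "\<lambda>_::nat. CD"
  by (intro product_prob_spaceI prob_space_CD)

lemma prob_space_SS: "prob_space (SS n)"
  unfolding sample_space_def by (intro prob_space_PiM prob_space_CD)

lemma measurable_SS_component: "i < n \<Longrightarrow> (\<lambda>w. w i) \<in> measurable (SS n) CD"
  unfolding sample_space_def by (intro measurable_component_singleton) auto

lemma measurable_SS_update:
  assumes "k < n" and "w \<in> space (PiM ({..<n} - {k}) (\<lambda>_. CD))"
  shows "(\<lambda>y. w(k := y)) \<in> measurable CD (SS n)"
proof -
  have "insert k ({..<n} - {k}) = {..<n}" using assms(1) by auto
  then show ?thesis
    using measurable_component_update[OF assms(2), of k] unfolding sample_space_def by simp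
qed

lemma borel_measurable_sum_coordinates:
  fixes f :: "nat \<Rightarrow> real \<times> bool \<times> bool \<Rightarrow> real"
  assumes f: "\<And>i. i \<in> I \<Longrightarrow> f i \<in> borel_measurable CD" and I: "I \<subseteq> {..<n}"
  shows "(\<lambda>w. \<Sum>i\<in>I. f i (w i)) \<in> borel_measurable (SS n)"
proof (rule borel_measurable_sum)
  fix i assume "i \<in> I"
  then have "i < n" using I by auto
  then show "(\<lambda>w. f i (w i)) \<in> borel_measurable (SS n)"
    by (rule measurable_compose[OF measurable_SS_component f[OF \<open>i \<in> I\<close>]])
qed

lemma AE_SS_abs_le_1: "AE w in SS n. \<forall>i<n. \<bar>fst (w i)\<bar> \<le> 1"
proof -
  have "AE w in SS n. \<bar>fst (w i)\<bar> \<le> 1" if "i \<in> {..<n}" for i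
    unfolding sample_space_def
    by (rule AE_PiM_component[where P="\<lambda>y. \<bar>fst y\<bar> \<le> 1", OF prob_space_CD that
          AE_coord_distr_abs_le_1])
  then have "AE w in SS n. \<forall>i\<in>{..<n}. \<bar>fst (w i)\<bar> \<le> 1"
    by (intro eventually_ball_finite) auto
  then show ?thesis by (rule eventually_mono) auto
qed

lemma nn_integral_SS_le_by_coordinate:
  assumes k: "k < n"
    and [measurable]: "F \<in> borel_measurable (SS n)" "G \<in> borel_measurable (SS n)"
    and le: "\<And>w. w \<in> space (PiM ({..<n} - {k}) (\<lambda>_. CD)) \<Longrightarrow>
      (\<integral>\<^sup>+y. G (w(k := y)) \<partial>CD) \<le> c * (\<integral>\<^sup>+y. F (w(k := y)) \<partial>CD)"
  shows "(\<integral>\<^sup>+w. G w \<partial>SS n) \<le> c * (\<integral>\<^sup>+w. F w \<partial>SS n)"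
proof -
  let ?R = "PiM ({..<n} - {k}) (\<lambda>_. CD)"
  have ins: "{..<n} = insert k ({..<n} - {k})" using k by auto
  have meas_insert: "H \<in> borel_measurable (PiM (insert k ({..<n} - {k})) (\<lambda>_. CD))"
    if "H \<in> borel_measurable (SS n)" for H
    using that unfolding sample_space_def by (subst ins[symmetric])
  have integral_SS: "(\<integral>\<^sup>+w. H w \<partial>SS n) = (\<integral>\<^sup>+w. (\<integral>\<^sup>+y. H (w(k := y)) \<partial>CD) \<partial>?R)"
    if "H \<in> borel_measurable (SS n)" for H
    unfolding sample_space_def
    by (subst ins, rule P.product_nn_integral_insert[OF _ _ meas_insert[OF that]]) auto
  have "(\<lambda>w. \<integral>\<^sup>+y. F (w(k := y)) \<partial>CD) \<in> borel_measurable ?R"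
  proof -
    have "(\<lambda>(w, y). F (w(k := y))) \<in> borel_measurable (?R \<Otimes>\<^sub>M CD)"
      using measurable_compose[OF measurable_add_dim meas_insert[OF assms(2)]]
      by (simp add: case_prod_beta')
    from sigma_finite_measure.borel_measurable_nn_integral_fst[OF
        prob_space_imp_sigma_finite[OF prob_space_CD] this]
    show ?thesis by simp
  qed
  then have "(\<integral>\<^sup>+w. c * (\<integral>\<^sup>+y. F (w(k := y)) \<partial>CD) \<partial>?R) = c * (\<integral>\<^sup>+w. F w \<partial>SS n)"
    by (simp add: nn_integral_cmult integral_SS)
  moreover have "(\<integral>\<^sup>+w. G w \<partial>SS n) \<le> (\<integral>\<^sup>+w. c * (\<integral>\<^sup>+y. F (w(k := y)) \<partial>CD) \<partial>?R)"
    unfolding integral_SS[OF assms(3)] by (intro nn_integral_mono le)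
  ultimately show ?thesis by simp
qed

lemma borel_measurable_free_part[measurable]:
  "i < n \<Longrightarrow> (\<lambda>w. free_part w i) \<in> borel_measurable (SS n)"
proof -
  assume "i < n"
  moreover have "(\<lambda>y. if is_free y then fst y else 0 :: real) \<in> borel_measurable CD"
    by (rule borel_measurable_coord_distr_free) simp
  ultimately show ?thesis
    unfolding free_part_eq by (rule measurable_compose[OF measurable_SS_component])
qed

lemma borel_measurable_coverage[measurable]:
  assumes "k \<le> n"
  shows "coverage e k \<in> borel_measurable (SS n)"
proof -
  let ?O = "{x \<in> space (SS n \<Otimes>\<^sub>M lborel). snd x \<in> subset_sum_nbhd e (free_part (fst x)) k \<inter> {-1/2..1/2}}"
  have "?O = (\<Union>I\<in>Pow {..<k}. {x \<in> space (SS n \<Otimes>\<^sub>M lborel).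
      \<bar>snd x - (\<Sum>i\<in>I. free_part (fst x) i)\<bar> \<le> e \<and> snd x \<in> {-1/2..1/2}})"
    by (auto simp: subset_sum_nbhd_def)
  also have "\<dots> \<in> sets (SS n \<Otimes>\<^sub>M lborel)"
  proof (intro sets.finite_UN)
    fix I assume "I \<in> Pow {..<k}"
    then have "i \<in> I \<Longrightarrow> i < n" for i using assms by auto
    then have [measurable]:
      "(\<lambda>x. \<Sum>i\<in>I. free_part (fst x) i) \<in> borel_measurable (SS n \<Otimes>\<^sub>M lborel)"
      by (intro borel_measurable_sum measurable_compose[OF measurable_fst borel_measurable_free_part])
    show "{x \<in> space (SS n \<Otimes>\<^sub>M lborel). \<bar>snd x - (\<Sum>i\<in>I. free_part (fst x) i)\<bar> \<le> e
        \<and> snd x \<in> {-1/2..1/2}} \<in> sets (SS n \<Otimes>\<^sub>M lborel)"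
      by measurable
  qed auto
  finally have "(\<lambda>w. emeasure lborel (Pair w -` ?O)) \<in> borel_measurable (SS n)"
    by (rule lborel.measurable_emeasure_Pair)
  then have "(\<lambda>w. enn2real (emeasure lborel (Pair w -` ?O))) \<in> borel_measurable (SS n)"
    by measurable
  moreover have "w \<in> space (SS n) \<Longrightarrow> enn2real (emeasure lborel (Pair w -` ?O)) = coverage e k w" for w
    by (auto simp: coverage_def measure_def space_pair_measure
        intro!: arg_cong[where f="\<lambda>A. enn2real (emeasure lborel A)"])
  ultimately show ?thesis by (rule measurable_cong[THEN iffD1, rotated])
qed

lemma nn_integral_CD_free:
  assumes [measurable]: "g \<in> borel_measurable borel"
  shows "(\<integral>\<^sup>+y. (if is_free y then g (fst y) else 0) \<partial>CD)
    = ennreal (p * (1 - q)) * (\<integral>\<^sup>+x. g x * indicator {-1..1} x \<partial>lborel) / 2"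
proof -
  have "(\<lambda>y. if is_free y then g (fst y) else 0) \<in> borel_measurable CD"
    by (rule borel_measurable_coord_distr_free) simp
  from nn_integral_coord_distr[OF p q this] show ?thesis
    by (simp add: nn_integral_cmult[symmetric] mult.assoc)
qed

lemma nn_integral_CD_shift_gain:
  assumes C[measurable]: "C \<in> sets borel" and a: "a = measure lborel (C \<inter> {-1/2..1/2})"
  shows "(\<integral>\<^sup>+y. (if is_free y then ennreal (measure lborel (shift_gain C (fst y)))
      else 0) \<partial>CD) = ennreal (p * (1 - q) * a * (1 - a) / 2)"
proof -
  have fin: "C \<inter> {-1/2..1/2} \<in> fmeasurable lborel" "shift_gain C x \<in> fmeasurable lborel" for x
    by (auto intro!: fmeasurable_subset_window simp: shift_gain_def)
  then have gain: "ennreal (measure lborel (shift_gain C x)) = emeasure lborel (shift_gain C x)" for x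
    by (simp add: emeasure_eq_measure2)
  have "emeasure lborel ({-1/2..1/2} - C) = emeasure lborel ({-1/2..1/2} - (C \<inter> {-1/2..1/2}))"
    by (rule arg_cong[where f="emeasure lborel"]) auto
  also have "\<dots> = 1 - ennreal a"
    using fin unfolding a by (subst emeasure_Diff) (auto simp: emeasure_eq_measure2)
  also have "\<dots> = ennreal (1 - a)"
    using ennreal_minus[of a 1] a by simp
  finally have uncovered: "emeasure lborel ({-1/2..1/2} - C) = ennreal (1 - a)" .
  have [measurable]: "(\<lambda>x. ennreal (measure lborel (shift_gain C x))) \<in> borel_measurable borel"
    unfolding measure_def by measurable
  have "(\<integral>\<^sup>+y. (if is_free y then ennreal (measure lborel (shift_gain C (fst y)))
      else 0) \<partial>CD) = ennreal (p * (1 - q))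
        * (\<integral>\<^sup>+x. ennreal (measure lborel (shift_gain C x)) * indicator {-1..1} x \<partial>lborel) / 2"
    by (rule nn_integral_CD_free) measurable
  also have "(\<integral>\<^sup>+x. ennreal (measure lborel (shift_gain C x)) * indicator {-1..1} x \<partial>lborel)
      = ennreal a * ennreal (1 - a)"
    using nn_integral_shift_gain[OF C] fin unfolding gain uncovered a
    by (simp add: emeasure_eq_measure2)
  also have "ennreal (p * (1 - q)) * (ennreal a * ennreal (1 - a)) / 2
      = ennreal (p * (1 - q) * a * (1 - a) / 2)"
  proof -
    have "a \<le> measure lborel {-1/2..1/2::real}"
      unfolding a by (intro measure_mono_fmeasurable) (auto intro: fmeasurableI)
    then have nonneg: "0 \<le> a" "0 \<le> 1 - a" "0 \<le> p * (1 - q)" using a p q by auto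
    then have "ennreal (p * (1 - q)) * (ennreal a * ennreal (1 - a)) = ennreal (p * (1 - q) * a * (1 - a))"
      by (simp add: ennreal_mult[symmetric] mult.assoc)
    also have "\<dots> / 2 = ennreal (p * (1 - q) * a * (1 - a) / 2)"
      using nonneg by (subst divide_ennreal[symmetric]) auto
    finally show ?thesis .
  qed
  finally show ?thesis .
qed

lemma nn_integral_potential_coverage_Suc:
  assumes e: "0 < e" "e \<le> 1/2" and k: "k < n" and w: "w \<in> space (PiM ({..<n} - {k}) (\<lambda>_. CD))"
  shows "(\<integral>\<^sup>+y. ennreal (potential (coverage e (Suc k) (w(k := y)))) \<partial>CD)
     \<le> ennreal (1 - p * (1 - q) / 4) * (\<integral>\<^sup>+y. ennreal (potential (coverage e k (w(k := y)))) \<partial>CD)"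
proof -
  let ?r = "p * (1 - q)"
  define C where "C = subset_sum_nbhd e (free_part w) k"
  define a where "a = coverage e k w"
  define G where "G y = (if is_free y then ennreal (measure lborel (shift_gain C (fst y))) else 0)" for y
  have [measurable]: "C \<in> sets borel" unfolding C_def by simp
  have a: "a = measure lborel (C \<inter> {-1/2..1/2})" "0 < a" "a \<le> 1"
    using coverage_bounds[OF e, of k w] e unfolding a_def C_def coverage_def by auto
  have r: "0 \<le> ?r" "?r \<le> 1" using p q by (auto intro: mult_le_one)
  have pointwise: "ennreal (potential (coverage e (Suc k) (w(k := y)))) + ennreal (1 / (2 * a^2)) * G y
      \<le> ennreal (potential a)" for y
  proof (cases "is_free y")
    case True
    have "0 \<le> potential (coverage e (Suc k) (w(k := y)))"
      using coverage_bounds[OF e, of "Suc k" "w(k := y)"] e by (intro potential_nonneg) auto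
    with potential_coverage_Suc_update_le[OF e True, of k w] show ?thesis
      using True unfolding G_def a_def C_def
      by (simp add: ennreal_mult[symmetric] ennreal_plus[symmetric] del: ennreal_plus)
        (intro ennreal_leI, linarith)
  next
    case False
    then have "G y = 0" by (auto simp: G_def)
    with False show ?thesis by (simp add: coverage_Suc_update_not_free a_def)
  qed
  have [measurable]: "(\<lambda>y. ennreal (potential (coverage e (Suc k) (w(k := y))))) \<in> borel_measurable CD"
    using measurable_compose[OF measurable_SS_update[OF k w] borel_measurable_coverage[of "Suc k" n e]] k
    by simp
  have [measurable]: "G \<in> borel_measurable CD"
    unfolding G_def measure_def by (rule borel_measurable_coord_distr_free) measurable
  have "(\<integral>\<^sup>+y. ennreal (1 / (2 * a^2)) * G y \<partial>CD) = ennreal (?r * (1 - a) / (4 * a))"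
  proof -
    have "(\<integral>\<^sup>+y. G y \<partial>CD) = ennreal (?r * a * (1 - a) / 2)"
      unfolding G_def C_def by (rule nn_integral_CD_shift_gain[OF _ a(1)[unfolded C_def]]) simp
    moreover have "1 / (2 * a^2) * (?r * a * (1 - a) / 2) = ?r * (1 - a) / (4 * a)"
      using a by (simp add: field_simps power2_eq_square)
    ultimately show ?thesis
      using a r by (simp add: nn_integral_cmult ennreal_mult[symmetric])
  qed
  then have "(\<integral>\<^sup>+y. ennreal (potential (coverage e (Suc k) (w(k := y)))) \<partial>CD)
      \<le> ennreal (potential a - ?r * (1 - a) / (4 * a))"
    using a r by (intro prob_space.nn_integral_le_diff[OF prob_space_CD _ _ pointwise]) auto
  also have "potential a - ?r * (1 - a) / (4 * a) = (1 - ?r / 4) * potential a"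
    using a unfolding potential_def by (simp add: field_simps)
  also have "ennreal \<dots> = ennreal (1 - ?r / 4) * (\<integral>\<^sup>+y. ennreal (potential (coverage e k (w(k := y)))) \<partial>CD)"
    using potential_nonneg[OF a(2,3)] r
    by (simp add: coverage_update_ge a_def ennreal_mult prob_space.emeasure_space_1[OF prob_space_CD])
  finally show ?thesis .
qed

lemma nn_integral_potential_coverage:
  assumes e: "0 < e" "e \<le> 1/2" and "m \<le> n"
  shows "(\<integral>\<^sup>+w. ennreal (potential (coverage e m w)) \<partial>SS n)
    \<le> ennreal (1 - p * (1 - q) / 4) ^ m * ennreal (1 / (2 * e))"
  using \<open>m \<le> n\<close>
proof (induction m)
  case 0
  have "potential (coverage e 0 w) \<le> 1 / (2 * e)" for w
  proof -
    have "2 * e \<le> coverage e 0 w" by (rule coverage_bounds[OF e])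
    then have "1 / coverage e 0 w \<le> 1 / (2 * e)" using e by (intro divide_left_mono) auto
    then show ?thesis unfolding potential_def by simp
  qed
  then have "(\<integral>\<^sup>+w. ennreal (potential (coverage e 0 w)) \<partial>SS n) \<le> (\<integral>\<^sup>+w. ennreal (1 / (2 * e)) \<partial>SS n)"
    by (intro nn_integral_mono ennreal_leI)
  also have "\<dots> = ennreal (1 / (2 * e))"
    by (simp add: prob_space.emeasure_space_1[OF prob_space_SS])
  finally show ?case by simp
next
  case (Suc m)
  then have m: "m < n" by simp
  have [measurable]: "coverage e m \<in> borel_measurable (SS n)" "coverage e (Suc m) \<in> borel_measurable (SS n)"
    using m by (intro borel_measurable_coverage; simp)+
  have "(\<integral>\<^sup>+w. ennreal (potential (coverage e (Suc m) w)) \<partial>SS n)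
      \<le> ennreal (1 - p * (1 - q) / 4) * (\<integral>\<^sup>+w. ennreal (potential (coverage e m w)) \<partial>SS n)"
    by (rule nn_integral_SS_le_by_coordinate[OF m _ _ nn_integral_potential_coverage_Suc[OF e m]])
      measurable
  also have "\<dots> \<le> ennreal (1 - p * (1 - q) / 4) * (ennreal (1 - p * (1 - q) / 4) ^ m * ennreal (1 / (2 * e)))"
    using Suc.IH m by (intro mult_left_mono) auto
  finally show ?case by (simp add: mult_ac)
qed

lemma prob_potential_coverage_ge:
  assumes e: "0 < e" "e \<le> 1/2" and m: "m \<le> n"
  shows "emeasure (SS n) {w \<in> space (SS n). e \<le> potential (coverage e m w)}
    \<le> ennreal ((1 - p * (1 - q) / 4) ^ m / (2 * e^2))"
proof -
  let ?R = "1 - p * (1 - q) / 4"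
  have "p * (1 - q) \<le> 1" using p q by (intro mult_le_one) auto
  then have R: "0 \<le> ?R" by simp
  have [measurable]: "coverage e m \<in> borel_measurable (SS n)"
    using m by (rule borel_measurable_coverage)
  have "emeasure (SS n) {w \<in> space (SS n). e \<le> potential (coverage e m w)}
      \<le> emeasure (SS n) {w \<in> space (SS n). 1 \<le> ennreal (1 / e) * ennreal (potential (coverage e m w))}"
  proof (rule emeasure_mono)
    show "{w \<in> space (SS n). e \<le> potential (coverage e m w)}
        \<subseteq> {w \<in> space (SS n). 1 \<le> ennreal (1 / e) * ennreal (potential (coverage e m w))}"
    proof safe
      fix w assume "e \<le> potential (coverage e m w)"
      then have "1 \<le> 1 / e * potential (coverage e m w)" using e by (simp add: field_simps)
      then show "1 \<le> ennreal (1 / e) * ennreal (potential (coverage e m w))"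
        using e by (simp add: ennreal_mult[symmetric] ennreal_leI del: ennreal_1 flip: ennreal_1)
    qed
  qed measurable
  also have "\<dots> \<le> ennreal (1 / e) * (\<integral>\<^sup>+w. ennreal (potential (coverage e m w)) * indicator (space (SS n)) w \<partial>SS n)"
    by (intro nn_integral_Markov_inequality) measurable
  also have "\<dots> = ennreal (1 / e) * (\<integral>\<^sup>+w. ennreal (potential (coverage e m w)) \<partial>SS n)"
    by (intro arg_cong[where f="(*) _"] nn_integral_cong) auto
  also have "\<dots> \<le> ennreal (1 / e) * (ennreal ?R ^ m * ennreal (1 / (2 * e)))"
    by (intro mult_left_mono nn_integral_potential_coverage[OF e m]) auto
  also have "\<dots> = ennreal (1 / e * (?R ^ m * (1 / (2 * e))))"
    using e R by (simp only: ennreal_power ennreal_mult mult_nonneg_nonneg zero_le_power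
        divide_nonneg_pos less_imp_le zero_less_one zero_le_one mult_pos_pos zero_less_numeral)
  also have "1 / e * (?R ^ m * (1 / (2 * e))) = ?R ^ m / (2 * e^2)"
    using e by (simp add: power2_eq_square)
  finally show ?thesis .
qed

lemma borel_measurable_reach[measurable]: "reach s active \<in> borel_measurable CD"
proof (rule borel_measurable_coord_distrI)
  fix b1 b2
  show "(\<lambda>x. reach s active (x, b1, b2)) \<in> borel_measurable borel"
    by (cases b1; cases b2; cases active) (simp_all add: reach_def)
qed

lemma nn_integral_exp_reach:
  assumes s: "s = 1 \<or> s = (-1::real)" and t: "0 < t" "t \<le> 1"
  shows "(\<integral>\<^sup>+y. ennreal (exp (- t * reach s active y)) \<partial>CD)
    \<le> ennreal (exp (t^2 - t * (if active then p * (1 - q) / 4 else 0)))"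
proof -
  define r where "r = (if active then p * (1 - q) else 0)"
  define G where "G x = 1 + t^2 - (t * r) * max (s * x) 0 - (t * p * q * s) * x" for x
  have tr: "t * r \<le> 1" unfolding r_def using p q t by (auto intro!: mult_le_one)
  \<comment> \<open>\<open>G\<close> dominates a mixture of exponentials, so it is nonnegative\<close>
  have G_nonneg: "0 \<le> G x" if "\<bar>x\<bar> \<le> 1" for x
    using p q unfolding G_def r_def
    by (intro order.trans[OF _ reach_exp_mixture_le[OF p q s t that]] add_nonneg_nonneg mult_nonneg_nonneg)
      auto
  have "(\<integral>\<^sup>+y. ennreal (exp (- t * reach s active y)) \<partial>CD)
      \<le> (\<integral>\<^sup>+x. ennreal (G x * indicator {-1..1} x) \<partial>lborel) / 2"
  proof (subst nn_integral_coord_distr[OF p q], measurable, intro divide_right_mono_ennreal nn_integral_mono)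
    fix x :: real
    show "(ennreal (p*q) * ennreal (exp (- t * reach s active (x,True,True)))
        + ennreal (p*(1-q)) * ennreal (exp (- t * reach s active (x,True,False)))
        + ennreal ((1-p)*q) * ennreal (exp (- t * reach s active (x,False,True)))
        + ennreal ((1-p)*(1-q)) * ennreal (exp (- t * reach s active (x,False,False))))
        * indicator {-1..1} x \<le> ennreal (G x * indicator {-1..1} x)"
    proof (cases "x \<in> {-1..1}")
      case True
      then have "\<bar>x\<bar> \<le> 1" by auto
      from reach_exp_mixture_le[OF p q s t this, of active] p q True
      show ?thesis
        by (simp add: G_def r_def ennreal_mult[symmetric] ennreal_plus[symmetric] ennreal_leI
            del: ennreal_plus)
    qed simp
  qed
  also have "(\<integral>\<^sup>+x. ennreal (G x * indicator {-1..1} x) \<partial>lborel) = ennreal (2 * (1 + t^2) - t * r / 2)"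
    unfolding G_def by (rule nn_integral_interval_pos_part[OF s G_nonneg[unfolded G_def]])
  also have "ennreal (2 * (1 + t^2) - t * r / 2) / 2 = ennreal (1 + (t^2 - t * (if active then p*(1-q)/4 else 0)))"
  proof -
    have "t * r / 2 \<le> 1" using tr by simp
    also have "1 \<le> 2 * (1 + t^2)" by (simp add: add_increasing2)
    finally have "ennreal (2 * (1 + t^2) - t * r / 2) / 2 = ennreal ((2 * (1 + t^2) - t * r / 2) / 2)"
      by (subst divide_ennreal[symmetric]) auto
    also have "(2 * (1 + t^2) - t * r / 2) / 2 = 1 + (t^2 - t * (if active then p*(1-q)/4 else 0))"
      by (simp add: r_def field_simps)
    finally show ?thesis .
  qed
  also have "\<dots> \<le> ennreal (exp (t^2 - t * (if active then p*(1-q)/4 else 0)))"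
    by (intro ennreal_leI) simp
  finally show ?thesis .
qed

lemma prob_sum_reach_le_1:
  assumes s: "s = 1 \<or> s = (-1::real)" and t: "0 < t" "t \<le> 1" and m: "m \<le> n"
  shows "emeasure (SS n) {w \<in> space (SS n). (\<Sum>i<n. reach s (m \<le> i) (w i)) \<le> 1}
     \<le> ennreal (exp (t + real n * t^2 - t * (p * (1 - q) / 4) * real (n - m)))"
proof -
  have [measurable]: "(\<lambda>w. \<Sum>i<n. reach s (m \<le> i) (w i)) \<in> borel_measurable (SS n)"
    by (rule borel_measurable_sum_coordinates[where f="\<lambda>i. reach s (m \<le> i)"]) simp_all
  have exponent: "(\<Sum>i<n. t^2 - t * (if m \<le> i then p * (1 - q) / 4 else 0))
      = real n * t^2 - t * (p * (1 - q) / 4) * real (n - m)"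
  proof -
    have "{..<n} = {..<m} \<union> {m..<n}" "{..<m} \<inter> {m..<n} = {}" using m by auto
    then show ?thesis using m by (simp add: sum.union_disjoint algebra_simps of_nat_diff)
  qed
  have "(\<integral>\<^sup>+w. ennreal (exp (- t * (\<Sum>i<n. reach s (m \<le> i) (w i)))) \<partial>SS n)
      = (\<integral>\<^sup>+w. (\<Prod>i\<in>{..<n}. ennreal (exp (- t * reach s (m \<le> i) (w i)))) \<partial>PiM {..<n} (\<lambda>_. CD))"
    unfolding sample_space_def
    by (intro nn_integral_cong) (simp add: sum_distrib_left exp_sum prod_ennreal)
  also have "\<dots> = (\<Prod>i\<in>{..<n}. (\<integral>\<^sup>+y. ennreal (exp (- t * reach s (m \<le> i) y)) \<partial>CD))"
    by (rule P.product_nn_integral_prod) auto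
  also have "\<dots> \<le> (\<Prod>i\<in>{..<n}. ennreal (exp (t^2 - t * (if m \<le> i then p * (1 - q) / 4 else 0))))"
    by (intro prod_mono_ennreal nn_integral_exp_reach[OF s t])
  also have "\<dots> = ennreal (exp (\<Sum>i<n. t^2 - t * (if m \<le> i then p * (1 - q) / 4 else 0)))"
    by (simp add: prod_ennreal exp_sum)
  also have "\<dots> = ennreal (exp (real n * t^2 - t * (p * (1 - q) / 4) * real (n - m)))"
    by (simp only: exponent)
  finally have mgf: "(\<integral>\<^sup>+w. ennreal (exp (- t * (\<Sum>i<n. reach s (m \<le> i) (w i)))) \<partial>SS n)
      \<le> ennreal (exp (real n * t^2 - t * (p * (1 - q) / 4) * real (n - m)))" .
  have "emeasure (SS n) {w \<in> space (SS n). (\<Sum>i<n. reach s (m \<le> i) (w i)) \<le> 1}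
     \<le> ennreal (exp (t * 1)) * (\<integral>\<^sup>+w. ennreal (exp (- t * (\<Sum>i<n. reach s (m \<le> i) (w i))))
        * indicator (space (SS n)) w \<partial>SS n)"
    by (rule Chernoff_ineq_nn_integral_le[OF t(1)]) auto
  also have "(\<integral>\<^sup>+w. ennreal (exp (- t * (\<Sum>i<n. reach s (m \<le> i) (w i)))) * indicator (space (SS n)) w \<partial>SS n)
      = (\<integral>\<^sup>+w. ennreal (exp (- t * (\<Sum>i<n. reach s (m \<le> i) (w i)))) \<partial>SS n)"
    by (intro nn_integral_cong) auto
  also have "ennreal (exp (t * 1)) * \<dots> \<le> ennreal (exp (t * 1)) * ennreal (exp (real n * t^2 - t * (p * (1 - q) / 4) * real (n - m)))"
    using mgf by (intro mult_left_mono) auto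
  also have "\<dots> = ennreal (exp (t + real n * t^2 - t * (p * (1 - q) / 4) * real (n - m)))"
    by (simp add: ennreal_mult[symmetric] exp_add[symmetric] algebra_simps)
  finally show ?thesis .
qed

lemma sets_approx_event:
  "{w \<in> space (SS n). \<forall>z\<in>{-1..1}. \<exists>I\<subseteq>{..<n}. \<bar>z - locked_sum n w - sum (free_part w) I\<bar> \<le> e}
    \<in> sets (SS n)"
proof -
  have "(\<lambda>w. locked_sum n w + sum (free_part w) I) \<in> borel_measurable (SS n)" if "I \<in> Pow {..<n}" for I
  proof (rule borel_measurable_add)
    show "locked_sum n \<in> borel_measurable (SS n)"
      unfolding locked_sum_eq
      by (rule borel_measurable_sum_coordinates[where f="\<lambda>_ y. if is_locked y then fst y else 0"])
        (simp_all add: borel_measurable_coord_distr_locked)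
    show "(\<lambda>w. sum (free_part w) I) \<in> borel_measurable (SS n)"
      using that by (intro borel_measurable_sum borel_measurable_free_part) auto
  qed
  then have "{w \<in> space (SS n). \<forall>z\<in>{-1..1}. \<exists>I\<in>Pow {..<n}.
      \<bar>z - (locked_sum n w + sum (free_part w) I)\<bar> \<le> e} \<in> sets (SS n)"
    by (intro sets_Collect_near_interval) auto
  then show ?thesis by (simp add: diff_diff_eq Bex_def)
qed

lemma AE_approx_of_reach_and_potential:
  assumes "m \<le> n" and h: "0 < h" "h \<le> 1/2"
  shows "AE w in SS n. 1 < (\<Sum>i<n. reach 1 (m \<le> i) (w i)) \<longrightarrow> 1 < (\<Sum>i<n. reach (-1) (m \<le> i) (w i))
    \<longrightarrow> potential (coverage h m w) < h
    \<longrightarrow> (\<forall>z\<in>{-1..1}. \<exists>I\<subseteq>{..<n}. \<bar>z - locked_sum n w - sum (free_part w) I\<bar> \<le> 2 * h)"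
  using AE_SS_abs_le_1[of n]
  by (rule eventually_mono) (use approx_of_reach_and_potential[OF assms(1) _ _ _ h] in auto)

lemma prob_approx_event_ge:
  assumes e: "0 < e" "e < 1" and d: "0 < d" "d < 1"
    and n: "512 / (p * (1 - q))^2 * ln (11 / (e * d)) \<le> real n"
  shows "1 - d \<le> measure (SS n)
    {w \<in> space (SS n). \<forall>z\<in>{-1..1}. \<exists>I\<subseteq>{..<n}. \<bar>z - locked_sum n w - sum (free_part w) I\<bar> \<le> e}"
    (is "_ \<le> measure _ ?G")
proof -
  interpret PS: prob_space "SS n" by (rule prob_space_SS)
  define r where "r = p * (1 - q)"
  define m where "m = n div 2"
  define h where "h = e / 2"
  have r: "0 < r" "r \<le> 1" unfolding r_def using p q by (auto intro: mult_le_one)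
  have h: "0 < h" "h \<le> 1/2" unfolding h_def using e by auto
  have m: "m \<le> n" unfolding m_def by simp
  \<comment> \<open>failure modes: too little reach upward, or downward, or too small coverage by the first half\<close>
  define B where "B s = {w \<in> space (SS n). (\<Sum>i<n. reach s (m \<le> i) (w i)) \<le> 1}" for s
  define B' where "B' = {w \<in> space (SS n). h \<le> potential (coverage h m w)}"
  have [measurable]: "coverage h m \<in> borel_measurable (SS n)" using m by (rule borel_measurable_coverage)
  have [measurable]: "(\<lambda>w. \<Sum>i<n. reach s (m \<le> i) (w i)) \<in> borel_measurable (SS n)" for s
    by (rule borel_measurable_sum_coordinates[where f="\<lambda>i. reach s (m \<le> i)"]) simp_all
  have sets: "B s \<in> sets (SS n)" "B' \<in> sets (SS n)" for s
    unfolding B_def B'_def by measurable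
  have "AE w in SS n. w \<in> space (SS n) - ?G \<longrightarrow> w \<in> B 1 \<union> B (-1) \<union> B'"
    using AE_approx_of_reach_and_potential[OF m h] unfolding B_def B'_def h_def
    by (rule eventually_mono) auto
  then have "1 - PS.prob ?G \<le> PS.prob (B 1 \<union> B (-1) \<union> B')"
    using sets by (simp add: PS.prob_compl[OF sets_approx_event, symmetric] PS.finite_measure_mono_AE)
  also have "\<dots> \<le> PS.prob (B 1) + PS.prob (B (-1)) + PS.prob B'"
    using sets measure_Un_le[of "B 1" "SS n" "B (-1)"]
    by (intro order.trans[OF measure_Un_le] add_right_mono) auto
  also have "\<dots> \<le> 2 * exp (r/16 + real n * (r/16)^2 - (r/16) * (r/4) * real (n - n div 2))
      + (1 - r/4) ^ (n div 2) / (2 * (e/2)^2)"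
  proof -
    have B: "PS.prob (B s) \<le> exp (r/16 + real n * (r/16)^2 - (r/16) * (r/4) * real (n - n div 2))"
      if "s = 1 \<or> s = -1" for s
      using prob_sum_reach_le_1[OF that _ _ m, of "r/16"] r
      unfolding B_def r_def m_def by (simp add: PS.emeasure_eq_measure)
    moreover have "PS.prob B' \<le> (1 - r/4) ^ (n div 2) / (2 * (e/2)^2)"
      using prob_potential_coverage_ge[OF h m] r
      unfolding B'_def r_def m_def h_def by (simp add: PS.emeasure_eq_measure)
    with B[of 1] B[of "-1"] show ?thesis by simp
  qed
  also have "\<dots> \<le> d"
  proof (rule failure_bound_le[OF r e d])
    have "2 * ln (11 / (e * d)) = r^2/256 * (512 / r^2 * ln (11 / (e * d)))"
      using r by (simp add: field_simps)
    also have "\<dots> \<le> r^2/256 * real n" using n unfolding r_def by (intro mult_left_mono) auto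
    finally show "2 * ln (11 / (e * d)) \<le> real n * r^2/256" by (simp add: mult.commute)
  qed
  finally show ?thesis by simp
qed

end

theorem mainTheorem2:
  shows "\<exists>C'>0. \<forall>p q :: real. 0 < p \<and> p < 1 \<and> 0 < q \<and> q < 1 \<longrightarrow>
    (\<exists>C>0. \<forall>(\<epsilon>::real) (\<delta>::real) (n::nat).
       0 < \<epsilon> \<and> \<epsilon> < 1 \<and> 0 < \<delta> \<and> \<delta> < 1 \<and> 0 < n \<and>
       real n \<ge> C * ln (C' / (\<epsilon> * \<delta>)) \<longrightarrow>
       measure (sample_space p q n)
         {\<omega> \<in> space (sample_space p q n).
            \<forall>z \<in> {-1..1::real}. \<exists>I \<subseteq> {..<n}.
              \<bar>z - (\<Sum>i<n. Mv \<omega> i * M'v \<omega> i * Xv \<omega> i)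
                 - (\<Sum>i\<in>I. Mv \<omega> i * (1 - M'v \<omega> i) * Xv \<omega> i)\<bar> \<le> \<epsilon>}
         \<ge> 1 - \<delta>)"
proof (rule exI[of _ 11], intro conjI allI impI, goal_cases)
  case (2 p q)
  then interpret prune_lock p q by unfold_locales auto
  have "0 < p * (1 - q)" using p q by simp
  then show ?case
    using prob_approx_event_ge[unfolded locked_sum_def free_part_def]
    by (intro exI[of _ "512 / (p * (1 - q))^2"]) auto
qed simp

end
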